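(* Let $S$ be a Polish space and $(X_n),(Y_n)$ sequences of $S$-valued random variables with $X_n//_*Y_n\to1$. Then: (a) if $Y_n\xrightarrow{(d)}Y$, then $X_n\xrightarrow{(d)}Y$; (b) if $(g_n)$ is a sequence of continuous functions from $S$ into a Polish space $S'$, then $g_n(X_n)//_*g_n(Y_n)\to1$.
   Context: $\mathbb{P}_X$ denotes the law of $X$. Write $X_n//_*Y_n\to1$ if for every $\varepsilon>0$ there exist measurable sets $A_n^\varepsilon\subset S$ and measurable functions $f_n^\varepsilon:A_n^\varepsilon\to\mathbb{R}$ with $\mathbb{P}_{X_n}=f_n^\varepsilon\mathbb{P}_{Y_n}$ on $A_n^\varepsilon$ (i.e. $\mathbb{P}_{X_n}(B)=\int_Bf_n^\varepsilon d\mathbb{P}_{Y_n}$ for Borel $B\subset A_n^\varepsilon$), such that $\sup_{x\in A_n^\varepsilon}|f_n^\varepsilon(x)-1|\to0$ as $n\to\infty$ and $\mathbb{P}_{Y_n}(A_n^\varepsilon)\ge1-\varepsilon$ for $n$ large enough. *)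

theory Defs
  imports "HOL-Probability.Probability"
begin

definition law :: "'m measure \<Rightarrow> ('m \<Rightarrow> 'a::topological_space) \<Rightarrow> 'a measure" where
  "law M X = distr M borel X"

definition conv_distr :: "(nat \<Rightarrow> 'a::metric_space measure) \<Rightarrow> 'a measure \<Rightarrow> bool" where
  "conv_distr P P0 \<longleftrightarrow>
     (\<forall>h :: 'a \<Rightarrow> real. continuous_on UNIV h \<and> bounded (range h) \<longrightarrow>
        (\<lambda>n. integral\<^sup>L (P n) h) \<longlonglongrightarrow> integral\<^sup>L P0 h)"

text \<open>The relation  X_n //_* Y_n \<rightarrow> 1  stated for the laws P n = law of X_n, Q n = law of Y_n.\<close>
definition dens_close :: "(nat \<Rightarrow> 'a::topological_space measure) \<Rightarrow> (nat \<Rightarrow> 'a measure) \<Rightarrow> bool" where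
  "dens_close P Q \<longleftrightarrow>
     (\<forall>\<epsilon>>0. \<exists>(A :: nat \<Rightarrow> 'a set) (f :: nat \<Rightarrow> 'a \<Rightarrow> real).
        (\<forall>n. A n \<in> sets borel \<and> f n \<in> borel_measurable borel \<and>
              (\<forall>B \<in> sets borel. B \<subseteq> A n \<longrightarrow>
                  set_integrable (Q n) B (f n) \<and> measure (P n) B = (LINT x:B|Q n. f n x))) \<and>
        (\<forall>\<delta>>0. eventually (\<lambda>n. \<forall>x \<in> A n. \<bar>f n x - 1\<bar> \<le> \<delta>) sequentially) \<and>
        eventually (\<lambda>n. measure (Q n) (A n) \<ge> 1 - \<epsilon>) sequentially)"

end

theory Submission
  imports Defs
begin

text \<open>Both parts rest on the fact that, for probability laws, X_n //_* Y_n -> 1 is equivalent to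
  d_TV(P_{X_n}, P_{Y_n}) -> 0. If the density is within delta of 1 on a set of mass at least
  1 - epsilon, the two laws differ by at most 2 delta + epsilon on every event. Conversely, write
  both laws as densities p, q with respect to a common finite measure: then ||p - q||_1 <= 2 d_TV,
  and by Markov's inequality p/q is within eta of 1 outside a set of mass at most 2 d_TV / eta,
  which is at most eta for eta = sqrt (2 d_TV). Part (a) follows from
  |E h(X_n) - E h(Y_n)| <= 2 sup |h| d_TV, part (b) from the fact that image measures do not
  increase d_TV.\<close>

definition tv_dist :: "'a measure \<Rightarrow> 'a measure \<Rightarrow> real" where
  "tv_dist P Q = (SUP B\<in>sets P. \<bar>measure P B - measure Q B\<bar>)"

lemma measure_diff_le_tv_dist:
  assumes "finite_measure P" "finite_measure Q" "B \<in> sets P"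
  shows "\<bar>measure P B - measure Q B\<bar> \<le> tv_dist P Q"
proof -
  have "\<bar>measure P C - measure Q C\<bar> \<le> measure P (space P) + measure Q (space Q)" for C
    using finite_measure.bounded_measure[OF assms(1), of C] finite_measure.bounded_measure[OF assms(2), of C]
      measure_nonneg[of P C] measure_nonneg[of Q C]
      measure_nonneg[of P "space P"] measure_nonneg[of Q "space Q"]
    unfolding abs_le_iff by linarith
  then show ?thesis
    unfolding tv_dist_def by (intro cSUP_upper assms(3) bdd_aboveI2)
qed

lemma tv_dist_nonneg: "finite_measure P \<Longrightarrow> finite_measure Q \<Longrightarrow> 0 \<le> tv_dist P Q"
  using measure_diff_le_tv_dist[of P Q "{}"] by simp

lemma tv_dist_le:
  assumes "\<And>B. B \<in> sets P \<Longrightarrow> \<bar>measure P B - measure Q B\<bar> \<le> r"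
  shows "tv_dist P Q \<le> r"
  unfolding tv_dist_def by (rule cSUP_least) (use assms in auto)

lemma tv_dist_distr_le:
  assumes P: "finite_measure P" and Q: "finite_measure Q" and sets_eq: "sets Q = sets P"
    and g: "g \<in> measurable P N"
  shows "tv_dist (distr P N g) (distr Q N g) \<le> tv_dist P Q"
proof (rule tv_dist_le)
  fix B assume "B \<in> sets (distr P N g)"
  then have B: "B \<in> sets N" by simp
  have gQ: "g \<in> measurable Q N" using g sets_eq by (simp cong: measurable_cong_sets)
  have "\<bar>measure P (g -` B \<inter> space P) - measure Q (g -` B \<inter> space P)\<bar> \<le> tv_dist P Q"
    using measurable_sets[OF g B] by (rule measure_diff_le_tv_dist[OF P Q])
  then show "\<bar>measure (distr P N g) B - measure (distr Q N g) B\<bar> \<le> tv_dist P Q"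
    using measure_distr[OF g B] measure_distr[OF gQ B] sets_eq_imp_space_eq[OF sets_eq] by simp
qed

lemma finite_measure_sup_measure':
  assumes P: "finite_measure P" and Q: "finite_measure Q" and sets_eq: "sets Q = sets P"
  shows "finite_measure (sup_measure' P Q)"
proof (rule finite_measureI)
  have "emeasure (sup_measure' P Q) (space P) \<le> emeasure P (space P) + emeasure Q (space Q)"
  proof (subst emeasure_sup_measure'[OF sets_eq sets.top], rule SUP_least)
    fix Y assume "Y \<in> sets P"
    show "emeasure P (space P \<inter> Y) + emeasure Q (space P \<inter> - Y) \<le> emeasure P (space P) + emeasure Q (space Q)"
      using sets_eq_imp_space_eq[OF sets_eq] sets_eq by (intro add_mono emeasure_mono) auto
  qed
  also have "\<dots> < \<infinity>"
    using finite_measure.emeasure_finite[OF P] finite_measure.emeasure_finite[OF Q] by (simp add: less_top)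
  finally show "emeasure (sup_measure' P Q) (space (sup_measure' P Q)) \<noteq> \<infinity>"
    using sets_eq by simp
qed

lemma density_enn2real_RN_deriv:
  assumes L: "finite_measure L" and N: "finite_measure N" and sets_eq: "sets N = sets L"
    and ac: "absolutely_continuous L N"
  shows "density L (\<lambda>x. ennreal (enn2real (RN_deriv L N x))) = N"
proof -
  interpret L: finite_measure L by fact
  have "AE x in L. RN_deriv L N x \<noteq> \<infinity>"
    using L.RN_deriv_finite[OF _ ac sets_eq] N by (simp add: finite_measure.sigma_finite_measure)
  then have "density L (\<lambda>x. ennreal (enn2real (RN_deriv L N x))) = density L (RN_deriv L N)"
    by (intro density_cong) (auto elim!: AE_mp simp: less_top)
  also have "\<dots> = N" using L.density_RN_deriv[OF ac sets_eq] .
  finally show ?thesis .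
qed

lemma finite_measures_common_density:
  assumes P: "finite_measure P" and Q: "finite_measure Q" and sets_eq: "sets Q = sets P"
  obtains L p q where "finite_measure L" "sets L = sets P"
    "p \<in> borel_measurable L" "q \<in> borel_measurable L" "\<And>x. 0 \<le> p x" "\<And>x. 0 \<le> q x"
    "P = density L (\<lambda>x. ennreal (p x))" "Q = density L (\<lambda>x. ennreal (q x))"
proof
  let ?L = "sup_measure' P Q"
  show L: "finite_measure ?L" and sets_L: "sets ?L = sets P"
    using finite_measure_sup_measure'[OF P Q sets_eq] sets_eq by auto
  have "absolutely_continuous ?L P" "absolutely_continuous ?L Q"
    using le_emeasure_sup_measure'1[OF sets_eq] le_emeasure_sup_measure'2[OF sets_eq] sets_eq
    by (auto simp: absolutely_continuous_def null_sets_def) (metis le_zero_eq)+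
  then show "P = density ?L (\<lambda>x. ennreal (enn2real (RN_deriv ?L P x)))"
    and "Q = density ?L (\<lambda>x. ennreal (enn2real (RN_deriv ?L Q x)))"
    using density_enn2real_RN_deriv[OF L] P Q sets_L sets_eq by auto
qed auto

lemma
  assumes [measurable]: "p \<in> borel_measurable L" and nonneg: "\<And>x. 0 \<le> p x"
    and fin: "finite_measure (density L (\<lambda>x. ennreal (p x)))"
  shows integrable_finite_density: "integrable L p"
    and measure_finite_density:
      "B \<in> sets L \<Longrightarrow> measure (density L (\<lambda>x. ennreal (p x))) B = (LINT x:B|L. p x)"
proof -
  interpret D: finite_measure "density L (\<lambda>x. ennreal (p x))" by (rule fin)
  have "integrable (density L (\<lambda>x. ennreal (p x))) (\<lambda>_. 1::real)" by simp
  then show "integrable L p" using integrable_density[of "\<lambda>_. 1::real" L p] nonneg by simp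
  assume B: "B \<in> sets L"
  have "measure (density L (\<lambda>x. ennreal (p x))) B = integral\<^sup>L (density L (\<lambda>x. ennreal (p x))) (indicator B)"
    using B by (simp add: D.emeasure_eq_measure)
  also have "\<dots> = (LINT x:B|L. p x)"
    using integral_density[of "indicator B :: _ \<Rightarrow> real" L p] nonneg B
    by (simp add: set_lebesgue_integral_def mult.commute)
  finally show "measure (density L (\<lambda>x. ennreal (p x))) B = (LINT x:B|L. p x)" .
qed

lemma L1_dist_le_tv_dist:
  assumes meas[measurable]: "p \<in> borel_measurable L" "q \<in> borel_measurable L"
    and nonneg: "\<And>x. 0 \<le> p x" "\<And>x. 0 \<le> q x"
    and fin: "finite_measure (density L (\<lambda>x. ennreal (p x)))" "finite_measure (density L (\<lambda>x. ennreal (q x)))"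
  shows "(\<integral>x. \<bar>p x - q x\<bar> \<partial>L) \<le> 2 * tv_dist (density L (\<lambda>x. ennreal (p x))) (density L (\<lambda>x. ennreal (q x)))"
proof -
  let ?P = "density L (\<lambda>x. ennreal (p x))" and ?Q = "density L (\<lambda>x. ennreal (q x))"
  have ip: "integrable L p" and iq: "integrable L q"
    using integrable_finite_density[OF meas(1) nonneg(1) fin(1)] integrable_finite_density[OF meas(2) nonneg(2) fin(2)] .
  define S where "S = {x\<in>space L. q x < p x}"
  define S' where "S' = space L - S"
  have [measurable]: "S \<in> sets L" "S' \<in> sets L" unfolding S_def S'_def by measurable
  have iS: "integrable L (\<lambda>x. indicator A x * f x)" if "A \<in> sets L" "integrable L f" for A and f :: "_ \<Rightarrow> real"
    using integrable_mult_indicator[OF that] by simp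
  have "(\<integral>x. \<bar>p x - q x\<bar> \<partial>L) = (\<integral>x. indicator S x * p x - indicator S x * q x + (indicator S' x * q x - indicator S' x * p x) \<partial>L)"
    by (rule Bochner_Integration.integral_cong) (auto simp: S_def S'_def indicator_def)
  also have "\<dots> = ((LINT x:S|L. p x) - (LINT x:S|L. q x)) + ((LINT x:S'|L. q x) - (LINT x:S'|L. p x))"
    unfolding set_lebesgue_integral_def
    by (subst Bochner_Integration.integral_add Bochner_Integration.integral_diff,
        (auto intro!: iS ip iq Bochner_Integration.integrable_diff)[2])+ simp
  also have "\<dots> = (measure ?P S - measure ?Q S) + (measure ?Q S' - measure ?P S')"
    using measure_finite_density[OF meas(1) nonneg(1) fin(1)] measure_finite_density[OF meas(2) nonneg(2) fin(2)] by simp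
  also have "\<dots> \<le> tv_dist ?P ?Q + tv_dist ?P ?Q"
    using measure_diff_le_tv_dist[OF fin, of S] measure_diff_le_tv_dist[OF fin, of S'] by (intro add_mono) auto
  finally show ?thesis by simp
qed

lemma integral_diff_le_tv_dist:
  assumes P: "finite_measure P" and Q: "finite_measure Q" and sets_eq: "sets Q = sets P"
    and h: "h \<in> borel_measurable P" and bound: "\<And>x. \<bar>h x\<bar> \<le> M"
  shows "\<bar>integral\<^sup>L P h - integral\<^sup>L Q h\<bar> \<le> 2 * M * tv_dist P Q"
proof -
  obtain L p q where L: "finite_measure L" "sets L = sets P"
    and meas[measurable]: "p \<in> borel_measurable L" "q \<in> borel_measurable L"
    and nonneg: "\<And>x. 0 \<le> p x" "\<And>x. 0 \<le> q x"
    and P_eq: "P = density L (\<lambda>x. ennreal (p x))" and Q_eq: "Q = density L (\<lambda>x. ennreal (q x))"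
    using finite_measures_common_density[OF P Q sets_eq] by metis
  have [measurable]: "h \<in> borel_measurable L" using h L(2) by (simp cong: measurable_cong_sets)
  have M: "0 \<le> M" using bound[of undefined] by linarith
  have ip: "integrable L p" and iq: "integrable L q"
    using integrable_finite_density[OF meas(1) nonneg(1)] integrable_finite_density[OF meas(2) nonneg(2)]
      P Q P_eq Q_eq by auto
  then have ipq: "integrable L (\<lambda>x. p x - q x)" by auto
  have ih: "integrable L (\<lambda>x. f x * h x)" if "integrable L f" for f
    by (rule Bochner_Integration.integrable_bound[of L "\<lambda>x. M * f x"])
       (use that bound M in \<open>auto intro!: AE_I2 simp: abs_mult mult.commute[of M] mult_left_mono\<close>)
  have "integral\<^sup>L P h - integral\<^sup>L Q h = (\<integral>x. p x * h x \<partial>L) - (\<integral>x. q x * h x \<partial>L)"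
    unfolding P_eq Q_eq using nonneg by (simp add: integral_density)
  also have "\<dots> = (\<integral>x. (p x - q x) * h x \<partial>L)"
    using ih[OF ip] ih[OF iq] by (simp add: left_diff_distrib)
  finally have "\<bar>integral\<^sup>L P h - integral\<^sup>L Q h\<bar> \<le> (\<integral>x. \<bar>(p x - q x) * h x\<bar> \<partial>L)"
    by (simp add: integral_abs_bound)
  also have "\<dots> \<le> (\<integral>x. M * \<bar>p x - q x\<bar> \<partial>L)"
    using Bochner_Integration.integrable_abs[OF ih[OF ipq]] ipq bound
    by (intro integral_mono) (auto simp: abs_mult mult.commute intro!: mult_right_mono)
  also have "\<dots> = M * (\<integral>x. \<bar>p x - q x\<bar> \<partial>L)" by simp
  also have "\<dots> \<le> M * (2 * tv_dist P Q)"
    using L1_dist_le_tv_dist[of p L q] nonneg P Q M unfolding P_eq Q_eq by (intro mult_left_mono) auto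
  finally show ?thesis by simp
qed

lemma measure_diff_le_if_density_near_one:
  assumes Q: "finite_measure Q" and C: "C \<in> sets Q"
    and dens: "set_integrable Q C f" "measure P C = (LINT x:C|Q. f x)"
    and near: "\<And>x. x \<in> C \<Longrightarrow> \<bar>f x - 1\<bar> \<le> d"
  shows "\<bar>measure P C - measure Q C\<bar> \<le> d * measure Q C"
proof -
  interpret Q: finite_measure Q by fact
  have const: "set_integrable Q C (\<lambda>_. c)" "(LINT x:C|Q. c) = c * measure Q C" for c :: real
    using C Q.integrable_const[of c] integrable_mult_indicator[of C Q "\<lambda>_. c"]
    by (simp_all add: set_integrable_def set_lebesgue_integral_def Int_absorb2 sets.sets_into_space mult.commute)
  have "(LINT x:C|Q. 1 - d) \<le> (LINT x:C|Q. f x)" "(LINT x:C|Q. f x) \<le> (LINT x:C|Q. 1 + d)"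
    using dens by (auto intro!: set_integral_mono const(1) dest!: near simp del: set_integral_diff simp: abs_le_iff)
  then show ?thesis
    using dens const(2) by (simp add: algebra_simps abs_le_iff)
qed

lemma tv_dist_le_if_density_near_one:
  assumes P: "prob_space P" and Q: "prob_space Q" and sets_eq: "sets P = sets Q" and A: "A \<in> sets Q"
    and dens: "\<And>B. B \<in> sets Q \<Longrightarrow> B \<subseteq> A \<Longrightarrow> set_integrable Q B f \<and> measure P B = (LINT x:B|Q. f x)"
    and near: "\<And>x. x \<in> A \<Longrightarrow> \<bar>f x - 1\<bar> \<le> d" and d: "0 \<le> d"
    and QA: "1 - e \<le> measure Q A"
  shows "tv_dist P Q \<le> 2 * d + e"
proof (rule tv_dist_le)
  interpret P: prob_space P by fact
  interpret Q: prob_space Q by fact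
  have space_eq: "space P = space Q" using sets_eq by (rule sets_eq_imp_space_eq)
  have e: "0 \<le> e" using QA Q.prob_le_1[of A] by linarith
  have sandwich: "\<bar>measure P C - measure Q C\<bar> \<le> d * measure Q C" if "C \<in> sets Q" "C \<subseteq> A" for C
    using dens[OF that] that near
    by (intro measure_diff_le_if_density_near_one[OF Q.finite_measure_axioms]) auto
  fix B assume "B \<in> sets P"
  then have B: "B \<in> sets Q" using sets_eq by simp
  show "\<bar>measure P B - measure Q B\<bar> \<le> 2 * d + e"
  proof (cases "d < 1")
    case False
    then show ?thesis
      using P.prob_le_1[of B] Q.prob_le_1[of B] measure_nonneg[of P B] measure_nonneg[of Q B] e
      unfolding abs_le_iff by linarith
  next
    case True
    have B_A: "B - A \<subseteq> space Q - A" using sets.sets_into_space[OF B] by blast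
    have "measure P (B - A) \<le> 1 - measure P A"
      using P.prob_compl[of A] P.finite_measure_mono[OF B_A] A sets_eq space_eq by simp
    also have "\<dots> \<le> 1 - (1 - d) * measure Q A"
      using sandwich[OF A order_refl] by (simp add: algebra_simps abs_le_iff)
    also have "\<dots> \<le> d + e"
      using mult_left_mono[OF QA, of "1 - d"] mult_nonneg_nonneg[OF d e] True by (simp add: algebra_simps)
    finally have "measure P (B - A) \<le> d + e" .
    moreover have "measure Q (B - A) \<le> e"
      using Q.prob_compl[of A] Q.finite_measure_mono[OF B_A] A QA by simp
    moreover have "measure P B = measure P (B \<inter> A) + measure P (B - A)"
      using P.finite_measure_Diff'[of B A] P.finite_measure_mono[of "B \<inter> A" B] A B sets_eq
      by (simp add: Int_commute)
    moreover have "measure Q B = measure Q (B \<inter> A) + measure Q (B - A)"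
      using Q.finite_measure_Diff'[of B A] A B by (simp add: Int_commute)
    moreover have "d * measure Q (B \<inter> A) \<le> d"
      using Q.prob_le_1[of "B \<inter> A"] d by (simp add: mult_left_le)
    ultimately show ?thesis
      using sandwich[OF sets.Int[OF B A] Int_lower2] measure_nonneg[of P "B - A"] measure_nonneg[of Q "B - A"]
      unfolding abs_le_iff by linarith
  qed
qed

lemma
  assumes meas[measurable]: "p \<in> borel_measurable L" "q \<in> borel_measurable L"
    and nonneg: "\<And>x. 0 \<le> p x" "\<And>x. 0 \<le> q x"
    and fin: "finite_measure (density L (\<lambda>x. ennreal (p x)))"
    and B[measurable]: "B \<in> sets L" and pos: "\<And>x. x \<in> B \<Longrightarrow> 0 < q x"
  shows set_integrable_density_ratio: "set_integrable (density L (\<lambda>x. ennreal (q x))) B (\<lambda>x. p x / q x)"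
    and measure_density_eq_set_integral_ratio:
      "measure (density L (\<lambda>x. ennreal (p x))) B = (LINT x:B|density L (\<lambda>x. ennreal (q x)). p x / q x)"
proof -
  have cancel: "(\<lambda>x. q x *\<^sub>R (indicator B x *\<^sub>R (p x / q x))) = (\<lambda>x. indicator B x * p x)"
    using pos by (force simp: indicator_def fun_eq_iff)
  have "integrable L (\<lambda>x. indicator B x * p x)"
    using integrable_mult_indicator[OF B integrable_finite_density[OF meas(1) nonneg(1) fin]] by simp
  then show "set_integrable (density L (\<lambda>x. ennreal (q x))) B (\<lambda>x. p x / q x)"
    unfolding set_integrable_def by (subst integrable_density) (use nonneg cancel in auto)
  have "(LINT x:B|density L (\<lambda>x. ennreal (q x)). p x / q x) = (LINT x:B|L. p x)"
    unfolding set_lebesgue_integral_def by (subst integral_density) (use nonneg cancel in \<open>auto simp: mult.commute\<close>)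
  then show "measure (density L (\<lambda>x. ennreal (p x))) B = (LINT x:B|density L (\<lambda>x. ennreal (q x)). p x / q x)"
    using measure_finite_density[OF meas(1) nonneg(1) fin B] by simp
qed

lemma measure_density_ratio_far_from_one:
  assumes meas[measurable]: "p \<in> borel_measurable L" "q \<in> borel_measurable L"
    and nonneg: "\<And>x. 0 \<le> p x" "\<And>x. 0 \<le> q x"
    and fin: "finite_measure (density L (\<lambda>x. ennreal (p x)))" "finite_measure (density L (\<lambda>x. ennreal (q x)))"
    and \<eta>: "0 < \<eta>"
  shows "measure (density L (\<lambda>x. ennreal (q x))) {x\<in>space L. \<not> (0 < q x \<and> \<bar>p x / q x - 1\<bar> \<le> \<eta>)}
    \<le> (\<integral>x. \<bar>p x - q x\<bar> \<partial>L) / \<eta>"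
proof -
  define C where "C = {x\<in>space L. \<not> (0 < q x \<and> \<bar>p x / q x - 1\<bar> \<le> \<eta>)}"
  have C[measurable]: "C \<in> sets L" unfolding C_def by measurable
  have ip: "integrable L p" and iq: "integrable L q"
    using integrable_finite_density[OF meas(1) nonneg(1) fin(1)] integrable_finite_density[OF meas(2) nonneg(2) fin(2)] .
  have markov: "indicator C x * q x \<le> \<bar>p x - q x\<bar> / \<eta>" for x
  proof (cases "x \<in> C \<and> 0 < q x")
    case True
    then have "\<eta> < \<bar>p x / q x - 1\<bar>" by (auto simp: C_def not_le)
    also have "\<bar>p x / q x - 1\<bar> = \<bar>p x - q x\<bar> / q x" using True by (simp add: field_simps)
    finally have "\<eta> * q x < \<bar>p x - q x\<bar>" using True by (simp add: field_simps)
    then show ?thesis using True \<eta> by (simp add: field_simps)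
  next
    case False
    then show ?thesis using nonneg(2)[of x] \<eta> by (auto simp: indicator_def)
  qed
  have "measure (density L (\<lambda>x. ennreal (q x))) C = (\<integral>x. indicator C x * q x \<partial>L)"
    using measure_finite_density[OF meas(2) nonneg(2) fin(2) C] by (simp add: set_lebesgue_integral_def)
  also have "\<dots> \<le> (\<integral>x. \<bar>p x - q x\<bar> / \<eta> \<partial>L)"
    using integrable_mult_indicator[OF C iq] ip iq markov by (intro integral_mono) auto
  finally show ?thesis unfolding C_def by simp
qed

lemma ex_density_near_one:
  assumes P: "prob_space P" and Q: "prob_space Q" and sets_P: "sets P = sets M" and sets_Q: "sets Q = sets M"
    and \<eta>: "0 < \<eta>" and tv: "2 * tv_dist P Q \<le> \<eta>\<^sup>2"
  shows "\<exists>A f. A \<in> sets M \<and> f \<in> borel_measurable M \<and>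
    (\<forall>B\<in>sets M. B \<subseteq> A \<longrightarrow> set_integrable Q B f \<and> measure P B = (LINT x:B|Q. f x)) \<and>
    (\<forall>x\<in>A. \<bar>f x - 1\<bar> \<le> \<eta>) \<and> 1 - \<eta> \<le> measure Q A"
proof -
  have fin: "finite_measure P" "finite_measure Q"
    by (intro prob_space.axioms(1) P Q)+
  obtain L p q where "finite_measure L" and sets_L: "sets L = sets M"
    and meas[measurable]: "p \<in> borel_measurable L" "q \<in> borel_measurable L"
    and nonneg: "\<And>x. 0 \<le> p x" "\<And>x. 0 \<le> q x"
    and P_eq: "P = density L (\<lambda>x. ennreal (p x))" and Q_eq: "Q = density L (\<lambda>x. ennreal (q x))"
    using finite_measures_common_density[OF fin] sets_P sets_Q by (metis (no_types))
  define A where "A = {x\<in>space L. 0 < q x \<and> \<bar>p x / q x - 1\<bar> \<le> \<eta>}"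
  have A[measurable]: "A \<in> sets L" unfolding A_def by measurable
  have f: "(\<lambda>x. p x / q x) \<in> borel_measurable M"
    using sets_L by (simp cong: measurable_cong_sets)
  have "space L - A = {x\<in>space L. \<not> (0 < q x \<and> \<bar>p x / q x - 1\<bar> \<le> \<eta>)}"
    by (auto simp: A_def)
  then have "measure Q (space L - A) \<le> (\<integral>x. \<bar>p x - q x\<bar> \<partial>L) / \<eta>"
    using measure_density_ratio_far_from_one[OF meas nonneg _ _ \<eta>] fin P_eq Q_eq by simp
  also have "\<dots> \<le> \<eta>\<^sup>2 / \<eta>"
    using L1_dist_le_tv_dist[OF meas nonneg] fin P_eq Q_eq tv \<eta> by (intro divide_right_mono) auto
  finally have "1 - \<eta> \<le> measure Q A"
    using prob_space.prob_compl[OF Q, of A] A sets_L sets_Q \<eta> Q_eq by (simp add: power2_eq_square)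
  moreover have "set_integrable Q B (\<lambda>x. p x / q x) \<and> measure P B = (LINT x:B|Q. p x / q x)"
    if "B \<in> sets M" "B \<subseteq> A" for B
    using set_integrable_density_ratio[OF meas nonneg _ _ ] measure_density_eq_set_integral_ratio[OF meas nonneg]
      fin P_eq Q_eq that sets_L by (auto simp: A_def)
  ultimately show ?thesis
    using A f sets_L by (intro exI[of _ A] exI[of _ "\<lambda>x. p x / q x"]) (auto simp: A_def)
qed

lemma dens_close_imp_tv_dist_tendsto_zero:
  fixes P Q :: "nat \<Rightarrow> 'a::topological_space measure"
  assumes P: "\<And>n. prob_space (P n)" and Q: "\<And>n. prob_space (Q n)"
    and sets_P: "\<And>n. sets (P n) = sets borel" and sets_Q: "\<And>n. sets (Q n) = sets borel"
    and close: "dens_close P Q"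
  shows "(\<lambda>n. tv_dist (P n) (Q n)) \<longlonglongrightarrow> 0"
proof (rule order_tendstoI)
  fix a :: real assume "a < 0"
  have "0 \<le> tv_dist (P n) (Q n)" for n
    using P Q by (intro tv_dist_nonneg prob_space.axioms(1))
  with \<open>a < 0\<close> show "eventually (\<lambda>n. a < tv_dist (P n) (Q n)) sequentially"
    by (intro always_eventually allI) (rule less_le_trans)
next
  fix r :: real assume r: "0 < r"
  then have "0 < r/4" by simp
  from close[unfolded dens_close_def, rule_format, OF this]
  obtain A f where rep: "\<forall>n. A n \<in> sets borel \<and> f n \<in> borel_measurable borel \<and>
      (\<forall>B \<in> sets borel. B \<subseteq> A n \<longrightarrow> set_integrable (Q n) B (f n) \<and> measure (P n) B = (LINT x:B|Q n. f n x))"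
    and near: "\<forall>\<delta>>0. eventually (\<lambda>n. \<forall>x \<in> A n. \<bar>f n x - 1\<bar> \<le> \<delta>) sequentially"
    and large: "eventually (\<lambda>n. measure (Q n) (A n) \<ge> 1 - r/4) sequentially"
    by (elim exE conjE) (rule that)
  have "eventually (\<lambda>n. \<forall>x \<in> A n. \<bar>f n x - 1\<bar> \<le> r/4) sequentially"
    by (rule near[rule_format]) (use r in simp)
  with large show "eventually (\<lambda>n. tv_dist (P n) (Q n) < r) sequentially"
  proof eventually_elim
    case (elim n)
    have "tv_dist (P n) (Q n) \<le> 2 * (r/4) + r/4"
    proof (rule tv_dist_le_if_density_near_one[OF P Q])
      show "sets (P n) = sets (Q n)" "A n \<in> sets (Q n)"
        using rep[rule_format, of n] sets_P[of n] sets_Q[of n] by simp_all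
      show "set_integrable (Q n) B (f n) \<and> measure (P n) B = (LINT x:B|Q n. f n x)"
        if "B \<in> sets (Q n)" "B \<subseteq> A n" for B
        using rep[rule_format, of n] that sets_Q[of n] by simp
    qed (use elim r in auto)
    then show ?case using r by linarith
  qed
qed

lemma tv_dist_tendsto_zero_imp_dens_close:
  fixes P Q :: "nat \<Rightarrow> 'a::topological_space measure"
  assumes P: "\<And>n. prob_space (P n)" and Q: "\<And>n. prob_space (Q n)"
    and sets_P: "\<And>n. sets (P n) = sets borel" and sets_Q: "\<And>n. sets (Q n) = sets borel"
    and tv: "(\<lambda>n. tv_dist (P n) (Q n)) \<longlonglongrightarrow> 0"
  shows "dens_close P Q"
proof -
  \<comment> \<open>the summand \<open>1/(n+1)\<close> keeps \<open>\<eta> n\<close> positive when the distance vanishes\<close>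
  define \<eta> where "\<eta> n = sqrt (2 * tv_dist (P n) (Q n) + inverse (Suc n))" for n
  have tv_nonneg: "0 \<le> tv_dist (P n) (Q n)" for n
    using P Q by (intro tv_dist_nonneg prob_space.axioms(1))
  have \<eta>_pos: "0 < \<eta> n" and \<eta>_sq: "2 * tv_dist (P n) (Q n) \<le> (\<eta> n)\<^sup>2" for n
    unfolding \<eta>_def using tv_nonneg[of n] by (simp_all add: add_nonneg_pos)
  have "\<eta> \<longlonglongrightarrow> sqrt (2 * 0 + 0)"
    unfolding \<eta>_def by (intro tendsto_intros tv LIMSEQ_inverse_real_of_nat)
  then have \<eta>_lim: "\<eta> \<longlonglongrightarrow> 0" by simp
  have \<eta>_small: "eventually (\<lambda>n. \<eta> n \<le> c) sequentially" if "0 < c" for c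
    using order_tendstoD(2)[OF \<eta>_lim that] by (auto elim: eventually_mono)
  have "\<forall>n. \<exists>A f. A \<in> sets borel \<and> f \<in> borel_measurable borel \<and>
      (\<forall>B\<in>sets borel. B \<subseteq> A \<longrightarrow> set_integrable (Q n) B f \<and> measure (P n) B = (LINT x:B|Q n. f x)) \<and>
      (\<forall>x\<in>A. \<bar>f x - 1\<bar> \<le> \<eta> n) \<and> 1 - \<eta> n \<le> measure (Q n) A"
    using ex_density_near_one[OF P Q sets_P sets_Q \<eta>_pos \<eta>_sq] by blast
  then obtain A f where dens: "\<forall>n. A n \<in> sets borel \<and> f n \<in> borel_measurable borel \<and>
      (\<forall>B\<in>sets borel. B \<subseteq> A n \<longrightarrow> set_integrable (Q n) B (f n) \<and> measure (P n) B = (LINT x:B|Q n. f n x))"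
    and near: "\<And>n x. x \<in> A n \<Longrightarrow> \<bar>f n x - 1\<bar> \<le> \<eta> n"
    and large: "\<And>n. 1 - \<eta> n \<le> measure (Q n) (A n)"
    by metis
  show ?thesis
    unfolding dens_close_def
  proof (intro allI impI exI[of _ A] exI[of _ f] conjI)
    fix \<delta> :: real assume "0 < \<delta>"
    from \<eta>_small[OF this] show "eventually (\<lambda>n. \<forall>x\<in>A n. \<bar>f n x - 1\<bar> \<le> \<delta>) sequentially"
      by eventually_elim (use near in \<open>blast intro: order_trans\<close>)
  next
    fix \<epsilon> :: real assume "0 < \<epsilon>"
    from \<eta>_small[OF this] show "eventually (\<lambda>n. 1 - \<epsilon> \<le> measure (Q n) (A n)) sequentially"
      by eventually_elim (use large in \<open>smt (verit)\<close>)
  qed (use dens in blast)+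
qed

lemma dens_close_distr:
  fixes P Q :: "nat \<Rightarrow> 'a::topological_space measure" and g :: "nat \<Rightarrow> 'a \<Rightarrow> 'b::topological_space"
  assumes P: "\<And>n. prob_space (P n)" and Q: "\<And>n. prob_space (Q n)"
    and sets_P: "\<And>n. sets (P n) = sets borel" and sets_Q: "\<And>n. sets (Q n) = sets borel"
    and g: "\<And>n. g n \<in> borel_measurable borel" and close: "dens_close P Q"
  shows "dens_close (\<lambda>n. distr (P n) borel (g n)) (\<lambda>n. distr (Q n) borel (g n))"
proof -
  have gP: "g n \<in> borel_measurable (P n)" and gQ: "g n \<in> borel_measurable (Q n)" for n
    using g sets_P sets_Q by (simp_all cong: measurable_cong_sets)
  have P': "prob_space (distr (P n) borel (g n))" and Q': "prob_space (distr (Q n) borel (g n))" for n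
    using prob_space.prob_space_distr[OF P gP] prob_space.prob_space_distr[OF Q gQ] .
  have "\<bar>tv_dist (distr (P n) borel (g n)) (distr (Q n) borel (g n))\<bar> \<le> tv_dist (P n) (Q n)" for n
  proof -
    have "0 \<le> tv_dist (distr (P n) borel (g n)) (distr (Q n) borel (g n))"
      using P' Q' by (intro tv_dist_nonneg prob_space.axioms(1))
    moreover have "tv_dist (distr (P n) borel (g n)) (distr (Q n) borel (g n)) \<le> tv_dist (P n) (Q n)"
      using prob_space.axioms(1)[OF P] prob_space.axioms(1)[OF Q] sets_P[of n] sets_Q[of n]
      by (intro tv_dist_distr_le gP) simp_all
    ultimately show ?thesis by simp
  qed
  then have "(\<lambda>n. tv_dist (distr (P n) borel (g n)) (distr (Q n) borel (g n))) \<longlonglongrightarrow> 0"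
    by (intro Lim_null_comparison[OF _ dens_close_imp_tv_dist_tendsto_zero[OF P Q sets_P sets_Q close]]
        always_eventually) simp
  then show ?thesis
    using tv_dist_tendsto_zero_imp_dens_close[of "\<lambda>n. distr (P n) borel (g n)" "\<lambda>n. distr (Q n) borel (g n)"]
      P' Q' by simp
qed

lemma conv_distr_if_dens_close:
  fixes P Q :: "nat \<Rightarrow> 'a::metric_space measure"
  assumes P: "\<And>n. prob_space (P n)" and Q: "\<And>n. prob_space (Q n)"
    and sets_P: "\<And>n. sets (P n) = sets borel" and sets_Q: "\<And>n. sets (Q n) = sets borel"
    and close: "dens_close P Q" and conv: "conv_distr Q R"
  shows "conv_distr P R"
  unfolding conv_distr_def
proof (intro allI impI)
  fix h :: "'a \<Rightarrow> real" assume h: "continuous_on UNIV h \<and> bounded (range h)"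
  then obtain M where M: "\<And>x. \<bar>h x\<bar> \<le> M" by (auto simp: bounded_iff)
  have "h \<in> borel_measurable borel" using h by (intro borel_measurable_continuous_onI) simp
  then have bound: "\<bar>integral\<^sup>L (P n) h - integral\<^sup>L (Q n) h\<bar> \<le> 2 * M * tv_dist (P n) (Q n)" for n
  proof (intro integral_diff_le_tv_dist M)
    show "finite_measure (P n)" "finite_measure (Q n)"
      by (intro prob_space.axioms(1) P Q)+
    show "sets (Q n) = sets (P n)" using sets_P[of n] sets_Q[of n] by simp
  qed (use sets_P[of n] in \<open>simp cong: measurable_cong_sets\<close>)
  have tv: "(\<lambda>n. tv_dist (P n) (Q n)) \<longlonglongrightarrow> 0"
    using P Q sets_P sets_Q close by (rule dens_close_imp_tv_dist_tendsto_zero)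
  have "(\<lambda>n. integral\<^sup>L (P n) h - integral\<^sup>L (Q n) h) \<longlonglongrightarrow> 0"
    using bound by (intro Lim_null_comparison[OF _ tendsto_mult_right_zero[OF tv, of "2 * M"]] always_eventually) simp
  moreover have "(\<lambda>n. integral\<^sup>L (Q n) h) \<longlonglongrightarrow> integral\<^sup>L R h"
    using conv h unfolding conv_distr_def by blast
  ultimately have "(\<lambda>n. (integral\<^sup>L (P n) h - integral\<^sup>L (Q n) h) + integral\<^sup>L (Q n) h)
      \<longlonglongrightarrow> 0 + integral\<^sup>L R h"
    by (rule tendsto_add)
  then show "(\<lambda>n. integral\<^sup>L (P n) h) \<longlonglongrightarrow> integral\<^sup>L R h" by simp
qed

lemma sets_law [simp]: "sets (law M X) = sets borel"
  by (simp add: law_def)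

lemma prob_space_law: "prob_space M \<Longrightarrow> X \<in> borel_measurable M \<Longrightarrow> prob_space (law M X)"
  unfolding law_def by (rule prob_space.prob_space_distr)

lemma law_comp:
  "X \<in> borel_measurable M \<Longrightarrow> g \<in> borel_measurable borel \<Longrightarrow> law M (g \<circ> X) = distr (law M X) borel g"
  unfolding law_def by (rule distr_distr[symmetric])

theorem lemma16:
  fixes MX MY :: "nat \<Rightarrow> 'm measure"
    and X Y :: "nat \<Rightarrow> 'm \<Rightarrow> 'a::polish_space"
  assumes "\<And>n. prob_space (MX n)" and "\<And>n. prob_space (MY n)"
    and "\<And>n. X n \<in> borel_measurable (MX n)" and "\<And>n. Y n \<in> borel_measurable (MY n)"
    and "dens_close (\<lambda>n. law (MX n) (X n)) (\<lambda>n. law (MY n) (Y n))"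
  shows "(\<forall>(N :: 'k measure) (Z :: 'k \<Rightarrow> 'a).
            prob_space N \<and> Z \<in> borel_measurable N \<and>
            conv_distr (\<lambda>n. law (MY n) (Y n)) (law N Z) \<longrightarrow>
            conv_distr (\<lambda>n. law (MX n) (X n)) (law N Z))
       \<and> (\<forall>g :: nat \<Rightarrow> 'a \<Rightarrow> 'b::polish_space.
            (\<forall>n. continuous_on UNIV (g n)) \<longrightarrow>
            dens_close (\<lambda>n. law (MX n) (g n \<circ> X n)) (\<lambda>n. law (MY n) (g n \<circ> Y n)))"
proof -
  note PX = prob_space_law[OF assms(1,3)] and PY = prob_space_law[OF assms(2,4)]
  have "dens_close (\<lambda>n. law (MX n) (g n \<circ> X n)) (\<lambda>n. law (MY n) (g n \<circ> Y n))"
    if "\<forall>n. continuous_on UNIV (g n)" for g :: "nat \<Rightarrow> 'a \<Rightarrow> 'b::polish_space"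
  proof -
    have g: "g n \<in> borel_measurable borel" for n
      using that by (intro borel_measurable_continuous_onI) simp
    show ?thesis
      using dens_close_distr[OF PX PY sets_law sets_law g assms(5)]
      by (simp add: law_comp[OF assms(3) g] law_comp[OF assms(4) g])
  qed
  then show ?thesis
    using conv_distr_if_dens_close[OF PX PY sets_law sets_law assms(5)] by blast
qed

end
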